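(* Let $P$ and $Q$ be two probability distributions on a finite set $\mathcal{A}$ that are positive on $\mathcal{A}$. Then $$\min_{x\in\mathcal{A}}\frac{P(x)}{Q(x)}\cdot D(Q\|P)\;\le\;\log\bigl(1+\chi^2(P,Q)\bigr)-D(P\|Q)\;\le\;\max_{x\in\mathcal{A}}\frac{P(x)}{Q(x)}\cdot D(Q\|P).$$
   Context: $D(P\|Q)=\sum_{x\in\mathcal{A}}P(x)\log\frac{P(x)}{Q(x)}$ is the relative entropy (natural logarithm), and $\chi^2(P,Q)=\sum_{x\in\mathcal{A}}\frac{(P(x)-Q(x))^2}{Q(x)}$ is the chi-squared divergence. *)

theory Defs
  imports Complex_Main
begin

definition rel_entropy :: "'a set \<Rightarrow> ('a \<Rightarrow> real) \<Rightarrow> ('a \<Rightarrow> real) \<Rightarrow> real" where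
  "rel_entropy A P Q = (\<Sum>x\<in>A. P x * ln (P x / Q x))"

definition chi_sq :: "'a set \<Rightarrow> ('a \<Rightarrow> real) \<Rightarrow> ('a \<Rightarrow> real) \<Rightarrow> real" where
  "chi_sq A P Q = (\<Sum>x\<in>A. (P x - Q x)^2 / Q x)"

end

theory Submission
  imports Defs
begin

text \<open>With \<open>r = P/Q\<close> and \<open>c = 1 + \<chi>\<^sup>2(P,Q) = \<Sum>x. P x * r x\<close>, all three quantities are weighted sums
  of the nonnegative function \<open>\<phi>(t) = t - 1 - ln t\<close>: \<open>D(Q\<parallel>P) = \<Sum> Q \<phi>(r)\<close> and
  \<open>ln c - D(P\<parallel>Q) = \<Sum> P \<phi>(r/c)\<close>. Rescaling the argument of \<open>\<phi>\<close> by \<open>c\<close> changes these sums only by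
  \<open>\<phi>(1/c) \<ge> 0\<close> resp. \<open>-\<phi>(c) \<le> 0\<close>, and \<open>min r \<cdot> Q \<le> P \<le> max r \<cdot> Q\<close> pointwise.\<close>

definition log_gap :: "real \<Rightarrow> real" where
  "log_gap t = t - 1 - ln t"

lemma log_gap_nonneg: "t > 0 \<Longrightarrow> 0 \<le> log_gap t"
  using ln_le_minus_one[of t] by (simp add: log_gap_def)

lemma sum_log_gap_rescale:
  fixes W r :: "'a \<Rightarrow> real"
  assumes "(\<Sum>x\<in>A. W x) = 1" and "\<And>x. x \<in> A \<Longrightarrow> r x > 0" and "s > 0"
  shows "(\<Sum>x\<in>A. W x * log_gap (r x / s))
       = (\<Sum>x\<in>A. W x * log_gap (r x)) + (\<Sum>x\<in>A. W x * r x) / s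
         - (\<Sum>x\<in>A. W x * r x) + ln s"
proof -
  have "W x * log_gap (r x / s) = W x * log_gap (r x) + W x * r x / s - W x * r x + W x * ln s"
    if "x \<in> A" for x
    using assms(2)[OF that] assms(3) by (simp add: log_gap_def ln_div algebra_simps)
  then have "(\<Sum>x\<in>A. W x * log_gap (r x / s))
      = (\<Sum>x\<in>A. W x * log_gap (r x) + W x * r x / s - W x * r x + W x * ln s)"
    by (rule sum.cong[OF refl])
  also have "\<dots> = (\<Sum>x\<in>A. W x * log_gap (r x)) + (\<Sum>x\<in>A. W x * r x) / s
      - (\<Sum>x\<in>A. W x * r x) + ln s"
    by (simp add: sum.distrib sum_subtractf sum_distrib_right[symmetric]
        sum_divide_distrib[symmetric] assms(1))
  finally show ?thesis .
qed

lemma one_plus_chi_sq_eq_sum: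
  assumes "(\<Sum>x\<in>A. P x) = 1" and "(\<Sum>x\<in>A. Q x) = 1" and "\<And>x. x \<in> A \<Longrightarrow> Q x \<noteq> 0"
  shows "1 + chi_sq A P Q = (\<Sum>x\<in>A. P x * (P x / Q x))"
proof -
  have "chi_sq A P Q = (\<Sum>x\<in>A. P x * (P x / Q x) - 2 * P x + Q x)"
    unfolding chi_sq_def using assms(3)
    by (intro sum.cong) (auto simp: field_simps power2_eq_square)
  also have "\<dots> = (\<Sum>x\<in>A. P x * (P x / Q x)) - 1"
    by (simp add: sum.distrib sum_subtractf sum_distrib_left[symmetric] assms(1,2))
  finally show ?thesis by simp
qed

context
  fixes A :: "'a set" and P Q :: "'a \<Rightarrow> real"
  assumes P_pos: "\<And>x. x \<in> A \<Longrightarrow> P x > 0" and Q_pos: "\<And>x. x \<in> A \<Longrightarrow> Q x > 0"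
    and P_sum: "(\<Sum>x\<in>A. P x) = 1" and Q_sum: "(\<Sum>x\<in>A. Q x) = 1"
begin

lemma ratio_pos: "x \<in> A \<Longrightarrow> P x / Q x > 0"
  using P_pos Q_pos by simp

lemma one_plus_chi_sq_eq: "1 + chi_sq A P Q = (\<Sum>x\<in>A. P x * (P x / Q x))"
  using Q_pos by (intro one_plus_chi_sq_eq_sum P_sum Q_sum) force

lemma one_plus_chi_sq_pos: "1 + chi_sq A P Q > 0"
proof -
  have "finite A" "A \<noteq> {}"
    using P_sum by (auto intro: ccontr)
  then show ?thesis
    unfolding one_plus_chi_sq_eq using P_pos ratio_pos by (intro sum_pos mult_pos_pos)
qed

lemma rel_entropy_eq_sum_log_gap:
  "rel_entropy A Q P = (\<Sum>x\<in>A. Q x * log_gap (P x / Q x))"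
proof -
  have "Q x * log_gap (P x / Q x) = P x - Q x + Q x * ln (Q x / P x)" if "x \<in> A" for x
    using P_pos[OF that] Q_pos[OF that] by (simp add: log_gap_def ln_div algebra_simps)
  then have "(\<Sum>x\<in>A. Q x * log_gap (P x / Q x)) = (\<Sum>x\<in>A. P x - Q x + Q x * ln (Q x / P x))"
    by (rule sum.cong[OF refl])
  also have "\<dots> = rel_entropy A Q P"
    by (simp add: rel_entropy_def sum.distrib sum_subtractf P_sum Q_sum)
  finally show ?thesis ..
qed

lemma sum_log_gap_ratio_eq: "(\<Sum>x\<in>A. P x * log_gap (P x / Q x)) = chi_sq A P Q - rel_entropy A P Q"
proof -
  have "(\<Sum>x\<in>A. P x * log_gap (P x / Q x))
      = (\<Sum>x\<in>A. P x * (P x / Q x)) - (\<Sum>x\<in>A. P x) - (\<Sum>x\<in>A. P x * ln (P x / Q x))"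
    by (simp add: log_gap_def algebra_simps sum_subtractf sum.distrib)
  then show ?thesis
    using one_plus_chi_sq_eq by (simp add: rel_entropy_def P_sum)
qed

lemma ln_chi_sq_minus_rel_entropy_eq:
  "ln (1 + chi_sq A P Q) - rel_entropy A P Q
     = (\<Sum>x\<in>A. P x * log_gap (P x / Q x / (1 + chi_sq A P Q)))"
  (is "_ = (\<Sum>x\<in>A. P x * log_gap (P x / Q x / ?c))")
proof -
  have "(\<Sum>x\<in>A. P x * log_gap (P x / Q x / ?c))
      = (\<Sum>x\<in>A. P x * log_gap (P x / Q x)) + ?c / ?c - ?c + ln ?c"
    using sum_log_gap_rescale[OF P_sum, of "\<lambda>x. P x / Q x", OF ratio_pos one_plus_chi_sq_pos]
    by (simp only: one_plus_chi_sq_eq)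
  then show ?thesis
    using sum_log_gap_ratio_eq one_plus_chi_sq_pos by simp
qed

lemma sum_log_gap_rescaled_ge_rel_entropy:
  assumes "c > 0"
  shows "rel_entropy A Q P \<le> (\<Sum>x\<in>A. Q x * log_gap (P x / Q x / c))"
proof -
  have "(\<Sum>x\<in>A. Q x * (P x / Q x)) = (\<Sum>x\<in>A. P x)"
    using Q_pos by (intro sum.cong) force+
  then show ?thesis
    using sum_log_gap_rescale[OF Q_sum, of "\<lambda>x. P x / Q x", OF ratio_pos assms]
      log_gap_nonneg[of "1 / c"] assms P_sum
    by (simp add: rel_entropy_eq_sum_log_gap log_gap_def ln_div)
qed

end

lemma sum_weighted_le:
  assumes "\<And>x. x \<in> A \<Longrightarrow> W x \<le> V x" and "\<And>x. x \<in> A \<Longrightarrow> 0 \<le> f x"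
  shows "(\<Sum>x\<in>A. W x * f x) \<le> (\<Sum>x\<in>A. V x * (f x :: real))"
  using assms by (intro sum_mono mult_right_mono) auto

theorem corollary1:
  fixes A :: "'a set" and P Q :: "'a \<Rightarrow> real"
  assumes "finite A"
    and "\<And>x. x \<in> A \<Longrightarrow> P x > 0" and "\<And>x. x \<in> A \<Longrightarrow> Q x > 0"
    and "(\<Sum>x\<in>A. P x) = 1" and "(\<Sum>x\<in>A. Q x) = 1"
  shows "(MIN x\<in>A. P x / Q x) * rel_entropy A Q P
           \<le> ln (1 + chi_sq A P Q) - rel_entropy A P Q
         \<and> ln (1 + chi_sq A P Q) - rel_entropy A P Q
           \<le> (MAX x\<in>A. P x / Q x) * rel_entropy A Q P"
proof -
  define m where "m = (MIN x\<in>A. P x / Q x)"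
  define M where "M = (MAX x\<in>A. P x / Q x)"
  define c where "c = 1 + chi_sq A P Q"
  have "A \<noteq> {}"
    using assms(4) by auto
  have c_pos: "c > 0"
    unfolding c_def by (rule one_plus_chi_sq_pos[OF assms(2-5)])
  have m_pos: "m > 0"
    unfolding m_def using assms(1-3) \<open>A \<noteq> {}\<close> by (simp add: Min_gr_iff)
  have "m * Q x \<le> P x" "P x \<le> M * Q x" if "x \<in> A" for x
  proof -
    have "m \<le> P x / Q x" "P x / Q x \<le> M"
      unfolding m_def M_def using assms(1) that by auto
    then show "m * Q x \<le> P x" "P x \<le> M * Q x"
      using assms(3)[OF that] by (simp_all add: pos_le_divide_eq pos_divide_le_eq)
  qed
  note weights = this
  have gap: "ln c - rel_entropy A P Q = (\<Sum>x\<in>A. P x * log_gap (P x / Q x / c))"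
    unfolding c_def by (rule ln_chi_sq_minus_rel_entropy_eq[OF assms(2-5)])
  have "m * rel_entropy A Q P \<le> (\<Sum>x\<in>A. m * Q x * log_gap (P x / Q x / c))"
    using mult_left_mono[OF sum_log_gap_rescaled_ge_rel_entropy[OF assms(2-5) c_pos]] m_pos
    by (simp add: sum_distrib_left mult.assoc)
  also have "\<dots> \<le> ln c - rel_entropy A P Q"
    unfolding gap using weights assms(2,3) c_pos by (intro sum_weighted_le log_gap_nonneg) auto
  finally have lower: "m * rel_entropy A Q P \<le> ln c - rel_entropy A P Q" .
  have "ln c - rel_entropy A P Q \<le> (\<Sum>x\<in>A. P x * log_gap (P x / Q x))"
    using sum_log_gap_ratio_eq[OF assms(2-5)] log_gap_nonneg[OF c_pos]
    by (simp add: c_def log_gap_def)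
  also have "\<dots> \<le> (\<Sum>x\<in>A. M * Q x * log_gap (P x / Q x))"
    using weights assms(2,3) by (intro sum_weighted_le log_gap_nonneg) auto
  also have "\<dots> = M * rel_entropy A Q P"
    by (simp add: rel_entropy_eq_sum_log_gap[OF assms(2-5)] sum_distrib_left mult.assoc)
  finally show ?thesis
    using lower by (simp add: m_def M_def c_def)
qed

end
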